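(* Suppose Assumptions 1–4 hold and the scale function is $s(t)=t$ (on $(0,\infty)$) or $s(t)=\exp(t)$ (on $\mathbb{R}$). Let $\theta^*=(\beta^*,\gamma^* )$ be the unique minimizer of $Q$ over $\Theta$. Then $$E\Big[\frac{1}{s(X'\gamma^* )}(Y-X'\beta^* )^2\Big]\le E\big[(Y-X'\beta_{LS})^2\big]^{1/2},$$ with equality if and only if $\theta^*=\theta_{LS}$.
   Context: Let $Y$ be a scalar random variable and $X$ a random $k\times1$ vector whose first component equals $1$; let $\mathcal{X}$ denote the support of $X$. Write $\mu(X)=E[Y\mid X]$ and $\sigma(X)^2=E[(Y-\mu(X))^2\mid X]$. Let $s$ be a positive scale function, write $s_j(t)=\partial^j s(t)/\partial t^j$ for $j=1,2,3$, and set $\Theta_\gamma=\{\gamma\in\mathbb{R}^k:\Pr[s(X'\gamma)>0]=1\}$ and $\Theta=\mathbb{R}^k\times\Theta_\gamma$. For $\theta=(\beta,\gamma)\in\Theta$ put $e(Y,X,\theta)=(Y-X'\beta)/s(X'\gamma)$ and $Q(\theta)=E\big[\tfrac12\{e(Y,X,\theta)^2+1\}s(X'\gamma)\big]$. OLS solution: let $\Theta_{\gamma,LS}=\{\gamma\in\mathbb{R}:s(\gamma)>0\}$ and $(\beta_{LS},\gamma_{LS})=\arg\min_{(\beta,\gamma)\in\mathbb{R}^k\times\Theta_{\gamma,LS}}E\big[\tfrac12\{((Y-X'\beta)/s(\gamma))^2+1\}s(\gamma)\big]$; set $\theta_{LS}=(\beta_{LS},(\gamma_{LS},0_{k-1}))\in\Theta$.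 Assumption 1: for $a=0$ or $a=-\infty$, $s:(a,\infty)\to(0,\infty)$ is three times differentiable, strictly increasing and convex, with $\lim_{t\to a}s(t)=0$ and $\lim_{t\to\infty}s(t)=\infty$. Assumption 2: $x\mapsto\sigma(x)^2$ is bounded away from $0$ uniformly on $\mathcal{X}$. Assumption 3: (i) $E[Y^4]<\infty$ and $E\|X\|^4<\infty$; (ii) for all $\gamma\in\Theta_\gamma$, $E[\|X\|^4s_2(X'\gamma)^2]<\infty$, $E[\|X\|^6s_3(X'\gamma)^2]<\infty$ and $E[\|X\|^6s_1(X'\gamma)^2s_2(X'\gamma)^2]<\infty$. Assumption 4: for all $\gamma\in\Theta_\gamma$, $E[XX'/s(X'\gamma)]$ is nonsingular. *)

theory Defs
  imports "HOL-Probability.Probability"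
begin

definition sigmaX :: "'a measure \<Rightarrow> ('a \<Rightarrow> real^'k) \<Rightarrow> 'a measure" where
  "sigmaX M X = vimage_algebra (space M) X borel"

definition cond_mean :: "'a measure \<Rightarrow> ('a \<Rightarrow> real^'k) \<Rightarrow> ('a \<Rightarrow> real) \<Rightarrow> 'a \<Rightarrow> real" where
  "cond_mean M X Y = real_cond_exp M (sigmaX M X) Y"

definition cond_var :: "'a measure \<Rightarrow> ('a \<Rightarrow> real^'k) \<Rightarrow> ('a \<Rightarrow> real) \<Rightarrow> 'a \<Rightarrow> real" where
  "cond_var M X Y = real_cond_exp M (sigmaX M X) (\<lambda>\<omega>. (Y \<omega> - cond_mean M X Y \<omega>)\<^sup>2)"

definition Theta_g :: "'a measure \<Rightarrow> ('a \<Rightarrow> real^'k) \<Rightarrow> (real \<Rightarrow> real) \<Rightarrow> (real^'k) set" where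
  "Theta_g M X s = {\<gamma>. AE \<omega> in M. s (X \<omega> \<bullet> \<gamma>) > 0}"

definition Qobj :: "'a measure \<Rightarrow> ('a \<Rightarrow> real) \<Rightarrow> ('a \<Rightarrow> real^'k) \<Rightarrow> (real \<Rightarrow> real)
    \<Rightarrow> real^'k \<Rightarrow> real^'k \<Rightarrow> ennreal" where
  "Qobj M Y X s \<beta> \<gamma> =
     (\<integral>\<^sup>+ \<omega>. ennreal ((((Y \<omega> - X \<omega> \<bullet> \<beta>) / s (X \<omega> \<bullet> \<gamma>))\<^sup>2 + 1) * s (X \<omega> \<bullet> \<gamma>) / 2) \<partial>M)"

definition QLS :: "'a measure \<Rightarrow> ('a \<Rightarrow> real) \<Rightarrow> ('a \<Rightarrow> real^'k) \<Rightarrow> (real \<Rightarrow> real)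
    \<Rightarrow> real^'k \<Rightarrow> real \<Rightarrow> ennreal" where
  "QLS M Y X s \<beta> g =
     (\<integral>\<^sup>+ \<omega>. ennreal ((((Y \<omega> - X \<omega> \<bullet> \<beta>) / s g)\<^sup>2 + 1) * s g / 2) \<partial>M)"

end

theory Submission
  imports Defs
begin

text \<open>Write \<open>A = E[(Y - X'\<beta>)\<^sup>2 / s(X'\<gamma>)]\<close> and \<open>B = E[s(X'\<gamma>)]\<close>, so that \<open>Q = (A + B)/2\<close>.
  For both scale functions, adding a constant to the intercept of \<open>\<gamma>\<close> multiplies \<open>s(X'\<gamma>)\<close> by an
  arbitrary \<open>k > 0\<close> and turns \<open>Q\<close> into \<open>(A/k + k B)/2\<close>; minimality of \<open>\<theta>\<^sup>*\<close> in this direction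
  forces \<open>A = B\<close>, hence \<open>Q(\<theta>\<^sup>*) = A\<close>. On the other hand the OLS objective at \<open>(\<beta>, g)\<close> is
  \<open>L/(2 s(g)) + s(g)/2\<close> with \<open>L = E[(Y - X'\<beta>)\<^sup>2]\<close>, whose minimum over \<open>g\<close> is \<open>\<surd>L\<close>. Since
  \<open>\<theta>\<^sub>L\<^sub>S\<close> lies in \<open>\<Theta>\<close> and \<open>Q(\<theta>\<^sub>L\<^sub>S)\<close> equals the OLS objective at its minimum, the claim follows from
  \<open>Q(\<theta>\<^sup>*) \<le> Q(\<theta>\<^sub>L\<^sub>S)\<close>, with equality only at the unique minimiser.\<close>

definition weighted_sq_residual ::
    "'a measure \<Rightarrow> ('a \<Rightarrow> real) \<Rightarrow> ('a \<Rightarrow> real^'k) \<Rightarrow> (real \<Rightarrow> real) \<Rightarrow> real^'k \<Rightarrow> real^'k \<Rightarrow> ennreal"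
  where "weighted_sq_residual M Y X s \<beta> \<gamma> =
    (\<integral>\<^sup>+ \<omega>. ennreal ((Y \<omega> - X \<omega> \<bullet> \<beta>)\<^sup>2 / s (X \<omega> \<bullet> \<gamma>)) \<partial>M)"

definition mean_scale :: "'a measure \<Rightarrow> ('a \<Rightarrow> real^'k) \<Rightarrow> (real \<Rightarrow> real) \<Rightarrow> real^'k \<Rightarrow> ennreal"
  where "mean_scale M X s \<gamma> = (\<integral>\<^sup>+ \<omega>. ennreal (s (X \<omega> \<bullet> \<gamma>)) \<partial>M)"

lemma eq_if_sum_le_reciprocal_scaling:
  fixes a b :: real
  assumes "0 \<le> a" "0 \<le> b" and le: "\<And>k. 0 < k \<Longrightarrow> a + b \<le> a / k + k * b"
  shows "a = b"
proof (cases "b = 0")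
  case True
  then show ?thesis using le[of 2] \<open>0 \<le> a\<close> by simp
next
  case False
  then have "0 < b" "0 < a + b" using assms by simp_all
  define k where "k = (a + b) / (2 * b)"
  have "0 < k" unfolding k_def using \<open>0 < b\<close> \<open>0 < a + b\<close> by simp
  have "a / k = 2 * a * b / (a + b)" "k * b = (a + b) / 2"
    unfolding k_def using \<open>0 < b\<close> \<open>0 < a + b\<close> by (simp_all add: field_simps)
  then have "a + b \<le> 2 * a * b / (a + b) + (a + b) / 2"
    using le[OF \<open>0 < k\<close>] by (simp only:)
  then have "(a - b)\<^sup>2 \<le> 0"
    using \<open>0 < a + b\<close> by (simp add: field_simps power2_eq_square)
  then show ?thesis by simp
qed

lemma sqrt_le_half_quotient_plus_half:
  fixes L t :: real
  assumes "0 \<le> L" "0 < t"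
  shows "sqrt L \<le> L / (2 * t) + t / 2"
proof -
  have "0 \<le> (sqrt L - t)\<^sup>2" by simp
  then show ?thesis using assms by (simp add: field_simps power2_eq_square)
qed

lemma unique_min_le_and_eq_iff:
  fixes f :: "'b \<Rightarrow> 'c::order"
  assumes "x \<noteq> x\<^sub>0 \<Longrightarrow> f x\<^sub>0 < f x"
  shows "f x\<^sub>0 \<le> f x \<and> (f x\<^sub>0 = f x \<longleftrightarrow> x\<^sub>0 = x)"
  using assms by (cases "x = x\<^sub>0") auto

lemma borel_measurable_id_or_exp:
  fixes s :: "real \<Rightarrow> real"
  assumes "s = (\<lambda>t. t) \<or> s = exp"
  shows "s \<in> borel_measurable borel"
  using assms by auto

lemma id_or_exp_attains:
  fixes s :: "real \<Rightarrow> real"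
  assumes "s = (\<lambda>t. t) \<or> s = exp" and "0 < u"
  shows "\<exists>g. s g = u"
  using assms by (auto intro: exI[of _ "ln u"])

lemma id_or_exp_rescale:
  fixes s :: "real \<Rightarrow> real" and \<gamma> :: "real^'k"
  assumes "s = (\<lambda>t. t) \<or> s = exp" and "0 < k"
  shows "\<exists>\<gamma>'. \<forall>x. x $ i = 1 \<longrightarrow> s (x \<bullet> \<gamma>') = k * s (x \<bullet> \<gamma>)"
proof (rule disjE[OF assms(1)])
  assume "s = (\<lambda>t. t)"
  then show ?thesis by (intro exI[of _ "k *\<^sub>R \<gamma>"]) simp
next
  assume "s = exp"
  then show ?thesis using \<open>0 < k\<close>
    by (intro exI[of _ "\<gamma> + axis i (ln k)"]) (simp add: inner_add_right inner_axis exp_add)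
qed

lemma Theta_g_iff_rescaled:
  assumes "0 < k" and "\<forall>\<omega>\<in>space M. s (X \<omega> \<bullet> \<gamma>') = k * s (X \<omega> \<bullet> \<gamma>)"
  shows "\<gamma>' \<in> Theta_g M X s \<longleftrightarrow> \<gamma> \<in> Theta_g M X s"
  unfolding Theta_g_def using assms
  by (auto elim!: AE_mp intro!: AE_I2 simp: zero_less_mult_iff)

lemma Qobj_eq_half_sum:
  fixes X :: "'a \<Rightarrow> real^'k"
  assumes [measurable]: "Y \<in> borel_measurable M" "X \<in> borel_measurable M" "s \<in> borel_measurable borel"
    and "\<gamma> \<in> Theta_g M X s"
  shows "Qobj M Y X s \<beta> \<gamma> = (weighted_sq_residual M Y X s \<beta> \<gamma> + mean_scale M X s \<gamma>) * ennreal (1/2)"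
proof -
  have "AE \<omega> in M. s (X \<omega> \<bullet> \<gamma>) > 0"
    using assms(4) unfolding Theta_g_def by simp
  moreover have "ennreal (((e / t)\<^sup>2 + 1) * t / 2) = (ennreal (e\<^sup>2 / t) + ennreal t) * ennreal (1/2)"
    if "0 < t" for e t :: real
  proof -
    have "((e / t)\<^sup>2 + 1) * t / 2 = (e\<^sup>2 / t + t) * (1/2)"
      using that by (simp add: field_simps power2_eq_square)
    moreover have "ennreal ((e\<^sup>2 / t + t) * (1/2)) = ennreal (e\<^sup>2 / t + t) * ennreal (1/2)"
      by (rule ennreal_mult) (use that in auto)
    ultimately show ?thesis using that by simp
  qed
  ultimately have "Qobj M Y X s \<beta> \<gamma> = (\<integral>\<^sup>+\<omega>. (ennreal ((Y \<omega> - X \<omega> \<bullet> \<beta>)\<^sup>2 / s (X \<omega> \<bullet> \<gamma>))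
      + ennreal (s (X \<omega> \<bullet> \<gamma>))) * ennreal (1/2) \<partial>M)"
    unfolding Qobj_def by (intro nn_integral_cong_AE) (auto elim!: AE_mp)
  also have "\<dots> = (weighted_sq_residual M Y X s \<beta> \<gamma> + mean_scale M X s \<gamma>) * ennreal (1/2)"
    unfolding weighted_sq_residual_def mean_scale_def
    by (simp add: nn_integral_multc nn_integral_add)
  finally show ?thesis .
qed

lemma
  fixes X :: "'a \<Rightarrow> real^'k"
  assumes [measurable]: "Y \<in> borel_measurable M" "X \<in> borel_measurable M" "s \<in> borel_measurable borel"
    and "0 < k" and rescaled: "\<forall>\<omega>\<in>space M. s (X \<omega> \<bullet> \<gamma>') = k * s (X \<omega> \<bullet> \<gamma>)"
  shows weighted_sq_residual_rescale:
      "weighted_sq_residual M Y X s \<beta> \<gamma>' = ennreal (1/k) * weighted_sq_residual M Y X s \<beta> \<gamma>"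
    and mean_scale_rescale: "mean_scale M X s \<gamma>' = ennreal k * mean_scale M X s \<gamma>"
proof -
  have "weighted_sq_residual M Y X s \<beta> \<gamma>'
      = (\<integral>\<^sup>+\<omega>. ennreal (1/k) * ennreal ((Y \<omega> - X \<omega> \<bullet> \<beta>)\<^sup>2 / s (X \<omega> \<bullet> \<gamma>)) \<partial>M)"
    unfolding weighted_sq_residual_def using \<open>0 < k\<close> rescaled
    by (intro nn_integral_cong) (simp flip: ennreal_mult')
  then show "weighted_sq_residual M Y X s \<beta> \<gamma>' = ennreal (1/k) * weighted_sq_residual M Y X s \<beta> \<gamma>"
    unfolding weighted_sq_residual_def by (simp add: nn_integral_cmult)
  have "mean_scale M X s \<gamma>' = (\<integral>\<^sup>+\<omega>. ennreal k * ennreal (s (X \<omega> \<bullet> \<gamma>)) \<partial>M)"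
    unfolding mean_scale_def using \<open>0 < k\<close> rescaled
    by (intro nn_integral_cong) (simp flip: ennreal_mult')
  then show "mean_scale M X s \<gamma>' = ennreal k * mean_scale M X s \<gamma>"
    unfolding mean_scale_def by (simp add: nn_integral_cmult)
qed

text \<open>This is the first-order condition of \<open>Q\<close> in the scale direction.\<close>

lemma Qobj_min_eq_weighted_sq_residual:
  fixes X :: "'a \<Rightarrow> real^'k"
  assumes "Y \<in> borel_measurable M" "X \<in> borel_measurable M" "s \<in> borel_measurable borel"
    and \<gamma>: "\<gamma> \<in> Theta_g M X s"
    and rescale: "\<And>k. 0 < k \<Longrightarrow> \<exists>\<gamma>'. \<forall>\<omega>\<in>space M. s (X \<omega> \<bullet> \<gamma>') = k * s (X \<omega> \<bullet> \<gamma>)"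
    and min: "\<And>\<gamma>'. \<gamma>' \<in> Theta_g M X s \<Longrightarrow> Qobj M Y X s \<beta> \<gamma> \<le> Qobj M Y X s \<beta> \<gamma>'"
    and finite: "Qobj M Y X s \<beta> \<gamma> \<noteq> \<infinity>"
  shows "Qobj M Y X s \<beta> \<gamma> = weighted_sq_residual M Y X s \<beta> \<gamma>"
proof -
  note Q_split = Qobj_eq_half_sum[OF assms(1-3)]
  have "weighted_sq_residual M Y X s \<beta> \<gamma> + mean_scale M X s \<gamma> \<noteq> \<infinity>"
    using finite unfolding Q_split[OF \<gamma>] by (auto simp: ennreal_top_mult)
  then obtain a b where a: "0 \<le> a" "weighted_sq_residual M Y X s \<beta> \<gamma> = ennreal a"
    and b: "0 \<le> b" "mean_scale M X s \<gamma> = ennreal b"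
    by (metis ennreal_cases ennreal_add_eq_top infinity_ennreal_def)
  have half_sum: "(ennreal x + ennreal y) * ennreal (1/2) = ennreal ((x + y) * (1/2))"
    if "0 \<le> x" "0 \<le> y" for x y :: real
    using that by (subst ennreal_mult) auto
  have "a + b \<le> a / k + k * b" if "0 < k" for k
  proof -
    obtain \<gamma>' where rescaled: "\<forall>\<omega>\<in>space M. s (X \<omega> \<bullet> \<gamma>') = k * s (X \<omega> \<bullet> \<gamma>)"
      using rescale[OF \<open>0 < k\<close>] by blast
    have \<gamma>': "\<gamma>' \<in> Theta_g M X s"
      using Theta_g_iff_rescaled[OF \<open>0 < k\<close> rescaled] \<gamma> by blast
    have "Qobj M Y X s \<beta> \<gamma>' = (ennreal (1/k) * ennreal a + ennreal k * ennreal b) * ennreal (1/2)"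
      by (simp only: Q_split[OF \<gamma>'] a(2) b(2)
          weighted_sq_residual_rescale[OF assms(1-3) \<open>0 < k\<close> rescaled]
          mean_scale_rescale[OF assms(1-3) \<open>0 < k\<close> rescaled])
    also have "\<dots> = ennreal ((a / k + k * b) * (1/2))"
    proof -
      have "ennreal (1/k) * ennreal a = ennreal (a / k)" "ennreal k * ennreal b = ennreal (k * b)"
        using \<open>0 < k\<close> by (simp_all flip: ennreal_mult')
      moreover have "0 \<le> a / k" "0 \<le> k * b" using \<open>0 < k\<close> a(1) b(1) by simp_all
      ultimately show ?thesis by (metis half_sum)
    qed
    finally have "Qobj M Y X s \<beta> \<gamma>' = ennreal ((a / k + k * b) * (1/2))" .
    moreover have "Qobj M Y X s \<beta> \<gamma> = ennreal ((a + b) * (1/2))"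
      using a b by (simp only: Q_split[OF \<gamma>] half_sum)
    ultimately have "(a + b) * (1/2) \<le> (a / k + k * b) * (1/2)"
      using min[OF \<gamma>'] \<open>0 < k\<close> a b by (simp add: ennreal_le_iff)
    then show ?thesis by (rule mult_right_le_imp_le) simp
  qed
  then have "a = b" using a(1) b(1) eq_if_sum_le_reciprocal_scaling by blast
  then show ?thesis using a b by (simp only: Q_split[OF \<gamma>] half_sum) simp
qed

lemma (in prob_space) square_integrable_if_fourth_power_integrable:
  fixes f :: "'a \<Rightarrow> real"
  assumes [measurable]: "f \<in> borel_measurable M" and "integrable M (\<lambda>\<omega>. f \<omega> ^ 4)"
  shows "integrable M (\<lambda>\<omega>. (f \<omega>)\<^sup>2)"
proof (rule Bochner_Integration.integrable_bound)
  show "integrable M (\<lambda>\<omega>. 1 + f \<omega> ^ 4)" using assms(2) by simp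
  have "x\<^sup>2 \<le> 1 + x ^ 4" for x :: real
  proof -
    have "2 * x\<^sup>2 \<le> 1 + x ^ 4"
      using zero_le_power2[of "x\<^sup>2 - 1"] by (simp add: power2_eq_square power4_eq_xxxx algebra_simps)
    then show ?thesis using zero_le_power2[of x] by linarith
  qed
  then show "AE \<omega> in M. norm ((f \<omega>)\<^sup>2) \<le> norm (1 + f \<omega> ^ 4)" by simp
qed simp

lemma integrable_sq_residual:
  fixes X :: "'a \<Rightarrow> real^'k"
  assumes [measurable]: "Y \<in> borel_measurable M" "X \<in> borel_measurable M"
    and "integrable M (\<lambda>\<omega>. (Y \<omega>)\<^sup>2)" "integrable M (\<lambda>\<omega>. (norm (X \<omega>))\<^sup>2)"
  shows "integrable M (\<lambda>\<omega>. (Y \<omega> - X \<omega> \<bullet> \<beta>)\<^sup>2)"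
proof (rule Bochner_Integration.integrable_bound)
  show "integrable M (\<lambda>\<omega>. 2 * (Y \<omega>)\<^sup>2 + 2 * (norm \<beta>)\<^sup>2 * (norm (X \<omega>))\<^sup>2)"
    using assms(3,4) by simp
  have "(y - x \<bullet> \<beta>)\<^sup>2 \<le> 2 * y\<^sup>2 + 2 * (norm \<beta>)\<^sup>2 * (norm x)\<^sup>2" for y and x :: "real^'k"
  proof -
    have "(x \<bullet> \<beta>)\<^sup>2 \<le> (norm x * norm \<beta>)\<^sup>2"
      using power_mono[OF Cauchy_Schwarz_ineq2 abs_ge_zero, of x \<beta> 2] by simp
    moreover have "(y - x \<bullet> \<beta>)\<^sup>2 \<le> 2 * y\<^sup>2 + 2 * (x \<bullet> \<beta>)\<^sup>2"
      using sum_squares_ge_zero[of "y + x \<bullet> \<beta>" 0] by (simp add: power2_eq_square algebra_simps)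
    ultimately show ?thesis by (simp add: power_mult_distrib algebra_simps)
  qed
  then show "AE \<omega> in M. norm ((Y \<omega> - X \<omega> \<bullet> \<beta>)\<^sup>2)
      \<le> norm (2 * (Y \<omega>)\<^sup>2 + 2 * (norm \<beta>)\<^sup>2 * (norm (X \<omega>))\<^sup>2)"
    by simp
qed simp

lemma QLS_eq:
  fixes X :: "'a \<Rightarrow> real^'k"
  assumes "prob_space M" and "integrable M (\<lambda>\<omega>. (Y \<omega> - X \<omega> \<bullet> \<beta>)\<^sup>2)" and "0 < s g"
  shows "QLS M Y X s \<beta> g = ennreal ((\<integral>\<omega>. (Y \<omega> - X \<omega> \<bullet> \<beta>)\<^sup>2 \<partial>M) / (2 * s g) + s g / 2)"
proof -
  interpret prob_space M by fact
  have "QLS M Y X s \<beta> g = (\<integral>\<^sup>+\<omega>. ennreal ((Y \<omega> - X \<omega> \<bullet> \<beta>)\<^sup>2 / (2 * s g) + s g / 2) \<partial>M)"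
    unfolding QLS_def using \<open>0 < s g\<close>
    by (intro nn_integral_cong arg_cong[where f = ennreal]) (simp add: field_simps power2_eq_square)
  also have "\<dots> = ennreal (\<integral>\<omega>. (Y \<omega> - X \<omega> \<bullet> \<beta>)\<^sup>2 / (2 * s g) + s g / 2 \<partial>M)"
    using assms(2,3) by (intro nn_integral_eq_integral) auto
  also have "(\<integral>\<omega>. (Y \<omega> - X \<omega> \<bullet> \<beta>)\<^sup>2 / (2 * s g) + s g / 2 \<partial>M)
      = (\<integral>\<omega>. (Y \<omega> - X \<omega> \<bullet> \<beta>)\<^sup>2 \<partial>M) / (2 * s g) + s g / 2"
    using assms(2) by (simp add: prob_space)
  finally show ?thesis .
qed

lemma QLS_min_eq_sqrt:
  fixes X :: "'a \<Rightarrow> real^'k"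
  assumes "prob_space M" and integrable: "integrable M (\<lambda>\<omega>. (Y \<omega> - X \<omega> \<bullet> \<beta>)\<^sup>2)"
    and attains: "\<And>u. 0 < u \<Longrightarrow> \<exists>g. s g = u"
    and "0 < s g\<^sub>0" and min: "\<And>g. 0 < s g \<Longrightarrow> QLS M Y X s \<beta> g\<^sub>0 \<le> QLS M Y X s \<beta> g"
  shows "QLS M Y X s \<beta> g\<^sub>0 = ennreal (sqrt (\<integral>\<omega>. (Y \<omega> - X \<omega> \<bullet> \<beta>)\<^sup>2 \<partial>M))"
proof -
  define L where "L = (\<integral>\<omega>. (Y \<omega> - X \<omega> \<bullet> \<beta>)\<^sup>2 \<partial>M)"
  have QLS: "QLS M Y X s \<beta> g = ennreal (L / (2 * s g) + s g / 2)" if "0 < s g" for g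
    unfolding L_def using assms(1) integrable that by (rule QLS_eq)
  have "0 \<le> L" unfolding L_def by simp
  moreover have "L \<noteq> 0"
  proof
    \<comment> \<open>with \<open>L = 0\<close> the objective is \<open>s(g)/2\<close>, which halving \<open>s(g\<^sub>0)\<close> would decrease\<close>
    assume "L = 0"
    obtain g where g: "s g = s g\<^sub>0 / 2" using attains[of "s g\<^sub>0 / 2"] \<open>0 < s g\<^sub>0\<close> by auto
    then have "ennreal (s g\<^sub>0 / 2) \<le> ennreal (s g\<^sub>0 / 4)"
      using min[of g] QLS[of g] QLS[OF \<open>0 < s g\<^sub>0\<close>] \<open>L = 0\<close> \<open>0 < s g\<^sub>0\<close> by simp
    then show False using \<open>0 < s g\<^sub>0\<close> by (simp add: ennreal_le_iff)
  qed
  ultimately have "0 < L" by simp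
  obtain g where g: "s g = sqrt L" using attains[of "sqrt L"] \<open>0 < L\<close> by auto
  have "L / (2 * sqrt L) + sqrt L / 2 = sqrt L"
    using \<open>0 < L\<close> by (simp add: field_simps real_sqrt_mult_self)
  then have "QLS M Y X s \<beta> g\<^sub>0 \<le> ennreal (sqrt L)"
    using min[of g] QLS[of g] g \<open>0 < L\<close> by simp
  moreover have "ennreal (sqrt L) \<le> QLS M Y X s \<beta> g\<^sub>0"
    unfolding QLS[OF \<open>0 < s g\<^sub>0\<close>]
    using sqrt_le_half_quotient_plus_half[OF \<open>0 \<le> L\<close> \<open>0 < s g\<^sub>0\<close>] by (rule ennreal_leI)
  ultimately show ?thesis unfolding L_def by (rule antisym)
qed

lemma
  fixes X :: "'a \<Rightarrow> real^'k"
  assumes "\<And>\<omega>. \<omega> \<in> space M \<Longrightarrow> X \<omega> $ i = 1"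
  shows Qobj_axis_eq_QLS: "Qobj M Y X s \<beta> (axis i g) = QLS M Y X s \<beta> g"
    and axis_in_Theta_g: "0 < s g \<Longrightarrow> axis i g \<in> Theta_g M X s"
  using assms unfolding Qobj_def QLS_def Theta_g_def
  by (auto intro!: nn_integral_cong AE_I2 simp: inner_axis)

theorem corollary1:
  fixes M :: "'a measure" and Y :: "'a \<Rightarrow> real" and X :: "'a \<Rightarrow> real^'k"
    and i0 :: 'k and s :: "real \<Rightarrow> real"
    and \<beta>s \<gamma>s \<beta>LS :: "real^'k" and \<gamma>LS :: real
  assumes P: "prob_space M"
    and Ymeas: "Y \<in> borel_measurable M" and Xmeas: "X \<in> borel_measurable M"
    and first_one: "\<And>\<omega>. \<omega> \<in> space M \<Longrightarrow> X \<omega> $ i0 = 1"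
    and scale: "s = (\<lambda>t. t) \<or> s = exp"
    and A2: "\<exists>c>0. AE \<omega> in M. c \<le> cond_var M X Y \<omega>"
    and A3i: "integrable M (\<lambda>\<omega>. (Y \<omega>) ^ 4)" "integrable M (\<lambda>\<omega>. (norm (X \<omega>)) ^ 4)"
    and A3ii: "\<And>\<gamma>. \<gamma> \<in> Theta_g M X s \<Longrightarrow>
         integrable M (\<lambda>\<omega>. norm (X \<omega>) ^ 4 * ((deriv ^^ 2) s (X \<omega> \<bullet> \<gamma>))\<^sup>2) \<and>
         integrable M (\<lambda>\<omega>. norm (X \<omega>) ^ 6 * ((deriv ^^ 3) s (X \<omega> \<bullet> \<gamma>))\<^sup>2) \<and>
         integrable M (\<lambda>\<omega>. norm (X \<omega>) ^ 6 * (deriv s (X \<omega> \<bullet> \<gamma>))\<^sup>2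
                                           * ((deriv ^^ 2) s (X \<omega> \<bullet> \<gamma>))\<^sup>2)"
    and A4: "\<And>\<gamma>. \<gamma> \<in> Theta_g M X s \<Longrightarrow>
         (\<forall>i j. integrable M (\<lambda>\<omega>. X \<omega> $ i * X \<omega> $ j / s (X \<omega> \<bullet> \<gamma>))) \<and>
         invertible (\<chi> i j. \<integral>\<omega>. X \<omega> $ i * X \<omega> $ j / s (X \<omega> \<bullet> \<gamma>) \<partial>M)"
    and star_in: "\<gamma>s \<in> Theta_g M X s"
    and star_unique_min: "\<And>\<beta> \<gamma>. \<gamma> \<in> Theta_g M X s \<Longrightarrow> (\<beta>, \<gamma>) \<noteq> (\<beta>s, \<gamma>s) \<Longrightarrow>
         Qobj M Y X s \<beta>s \<gamma>s < Qobj M Y X s \<beta> \<gamma>"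
    and LS_in: "s \<gamma>LS > 0"
    and LS_min: "\<And>\<beta> g. s g > 0 \<Longrightarrow> QLS M Y X s \<beta>LS \<gamma>LS \<le> QLS M Y X s \<beta> g"
  shows "(\<integral>\<^sup>+ \<omega>. ennreal ((Y \<omega> - X \<omega> \<bullet> \<beta>s)\<^sup>2 / s (X \<omega> \<bullet> \<gamma>s)) \<partial>M)
           \<le> ennreal (sqrt (\<integral>\<omega>. (Y \<omega> - X \<omega> \<bullet> \<beta>LS)\<^sup>2 \<partial>M))
       \<and> ((\<integral>\<^sup>+ \<omega>. ennreal ((Y \<omega> - X \<omega> \<bullet> \<beta>s)\<^sup>2 / s (X \<omega> \<bullet> \<gamma>s)) \<partial>M)
             = ennreal (sqrt (\<integral>\<omega>. (Y \<omega> - X \<omega> \<bullet> \<beta>LS)\<^sup>2 \<partial>M))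
          \<longleftrightarrow> (\<beta>s = \<beta>LS \<and> \<gamma>s = (\<chi> i. if i = i0 then \<gamma>LS else 0)))"
proof -
  \<comment> \<open>Assumptions 2, 3(ii) and 4 serve existence and uniqueness of \<open>\<theta>\<^sup>*\<close>, which are hypotheses here.\<close>
  interpret prob_space M by (rule P)
  note measurable_data = Ymeas Xmeas borel_measurable_id_or_exp[OF scale]
  define \<gamma>LSv where "\<gamma>LSv = axis i0 \<gamma>LS"
  define L where "L = (\<integral>\<omega>. (Y \<omega> - X \<omega> \<bullet> \<beta>LS)\<^sup>2 \<partial>M)"
  have "integrable M (\<lambda>\<omega>. (Y \<omega> - X \<omega> \<bullet> \<beta>LS)\<^sup>2)"
    using A3i Ymeas Xmeas by (intro integrable_sq_residual square_integrable_if_fourth_power_integrable) auto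
  then have "QLS M Y X s \<beta>LS \<gamma>LS = ennreal (sqrt L)"
    unfolding L_def using LS_min by (intro QLS_min_eq_sqrt[OF P _ id_or_exp_attains[OF scale] LS_in])
  then have Q_LS: "Qobj M Y X s \<beta>LS \<gamma>LSv = ennreal (sqrt L)"
    unfolding \<gamma>LSv_def using first_one by (simp add: Qobj_axis_eq_QLS)
  have "\<gamma>LSv \<in> Theta_g M X s"
    unfolding \<gamma>LSv_def using first_one LS_in by (rule axis_in_Theta_g)
  then have compare_LS: "Qobj M Y X s \<beta>s \<gamma>s \<le> Qobj M Y X s \<beta>LS \<gamma>LSv
      \<and> (Qobj M Y X s \<beta>s \<gamma>s = Qobj M Y X s \<beta>LS \<gamma>LSv \<longleftrightarrow> (\<beta>s, \<gamma>s) = (\<beta>LS, \<gamma>LSv))"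
    using unique_min_le_and_eq_iff[of "(\<beta>LS, \<gamma>LSv)" "(\<beta>s, \<gamma>s)" "case_prod (Qobj M Y X s)"]
      star_unique_min by auto
  have "Qobj M Y X s \<beta>s \<gamma>s = weighted_sq_residual M Y X s \<beta>s \<gamma>s"
  proof (rule Qobj_min_eq_weighted_sq_residual[OF measurable_data star_in])
    show "\<exists>\<gamma>'. \<forall>\<omega>\<in>space M. s (X \<omega> \<bullet> \<gamma>') = k * s (X \<omega> \<bullet> \<gamma>s)" if "0 < k" for k
      using id_or_exp_rescale[OF scale that, of i0 \<gamma>s] first_one by blast
    show "Qobj M Y X s \<beta>s \<gamma>s \<le> Qobj M Y X s \<beta>s \<gamma>'" if "\<gamma>' \<in> Theta_g M X s" for \<gamma>'
      using unique_min_le_and_eq_iff[of "\<gamma>'" "\<gamma>s" "Qobj M Y X s \<beta>s"] star_unique_min[OF that] by auto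
    show "Qobj M Y X s \<beta>s \<gamma>s \<noteq> \<infinity>"
      using compare_LS unfolding Q_LS by (auto simp: top_unique)
  qed
  then show ?thesis
    using compare_LS Q_LS unfolding weighted_sq_residual_def L_def \<gamma>LSv_def axis_def by simp
qed

end
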